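(* Let $G$ be a group of isometries of the rooted tree $\mathcal T=X^*$. Then the set of pre-layered subgroups of $G$ is closed under intersections and under taking the subgroup generated by two of them (so forms a lattice), and for every word $w$ in a free group, if $H\le G$ is pre-layered then the verbal subgroup $w(H)$ is pre-layered.
   Context: $X$ is a finite alphabet with $|X|\ge2$ and $\mathcal T=X^*$ the associated rooted regular tree. For $x\in X$ and an isometry $g$, $x*g$ denotes the isometry acting as $g$ on the subtree below $x$ (i.e. $(xw)^{x*g}=xw^g$) and fixing all other vertices. A subgroup $H$ is pre-layered if $x*H\le H$ for all $x\in X$. For a word $w(X_1,\dots,X_n)$, $w(H)$ is the subgroup generated by all values $w(h_1,\dots,h_n)$, $h_i\in H$. *)

theory Defs
  imports "HOL-Algebra.Algebra"
begin

text \<open>Vertices of the rooted tree X^* are lists over the alphabet 'x (root = []).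
  An isometry of the rooted tree is a bijection of the vertex set preserving
  levels (length) and the prefix (ancestor) relation, i.e. a rooted tree automorphism.\<close>

definition tree_isometry :: "('x list \<Rightarrow> 'x list) \<Rightarrow> bool" where
  "tree_isometry g \<longleftrightarrow> bij g \<and> (\<forall>w. length (g w) = length w)
      \<and> (\<forall>n w. g (take n w) = take n (g w))"

text \<open>The full isometry group, acting on the right: w^(g h) = (w^g)^h.\<close>

definition Isom :: "('x list \<Rightarrow> 'x list) monoid" where
  "Isom = \<lparr> carrier = {g. tree_isometry g}, monoid.mult = (\<lambda>g h. h \<circ> g), one = id \<rparr>"

text \<open>x * g: acts as g below x and fixes all other vertices.\<close>

definition star :: "'x \<Rightarrow> ('x list \<Rightarrow> 'x list) \<Rightarrow> ('x list \<Rightarrow> 'x list)" where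
  "star x g = (\<lambda>v. case v of [] \<Rightarrow> [] | y # u \<Rightarrow> (if y = x then x # g u else y # u))"

definition prelayered :: "('x list \<Rightarrow> 'x list) set \<Rightarrow> bool" where
  "prelayered H \<longleftrightarrow> subgroup H (Isom :: ('x list \<Rightarrow> 'x list) monoid)
      \<and> (\<forall>x. \<forall>h\<in>H. star x h \<in> H)"

text \<open>Words in the free group on X_0, X_1, ...: lists of letters (i, e), meaning X_i if e
  is True and X_i^{-1} otherwise. Evaluation under an assignment f of group elements.\<close>

type_synonym fword = "(nat \<times> bool) list"

fun word_eval :: "('a, 'b) monoid_scheme \<Rightarrow> fword \<Rightarrow> (nat \<Rightarrow> 'a) \<Rightarrow> 'a" where
  "word_eval G [] f = \<one>\<^bsub>G\<^esub>"
| "word_eval G ((i, e) # w) f =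
     (if e then f i else inv\<^bsub>G\<^esub> (f i)) \<otimes>\<^bsub>G\<^esub> word_eval G w f"

definition verbal :: "fword \<Rightarrow> ('x list \<Rightarrow> 'x list) set \<Rightarrow> ('x list \<Rightarrow> 'x list) set" where
  "verbal w H = generate Isom {word_eval Isom w f | f. \<forall>i. f i \<in> H}"

end

theory Submission
  imports Defs
begin

text \<open>Each map \<open>star x\<close> is an endomorphism of the isometry group. Hence it commutes with
  evaluating words, so it maps the generating set of \<open>w(H)\<close> into itself when \<open>H\<close> is
  pre-layered; and a subgroup generated by a \<open>star\<close>-stable set is pre-layered, because the
  image of a generated subgroup under a homomorphism is generated by the image of the
  generators.\<close>

lemma tree_isometry_inv:
  assumes "tree_isometry g"
  shows "tree_isometry (inv_into UNIV g)"
proof -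
  have bij: "bij g" and len: "\<And>w. length (g w) = length w"
    and take: "\<And>n w. g (take n w) = take n (g w)"
    using assms unfolding tree_isometry_def by auto
  have g_inv: "g (inv_into UNIV g w) = w" for w
    using bij by (simp add: bij_is_surj surj_f_inv_f)
  have "length (inv_into UNIV g w) = length w" for w
    using len[of "inv_into UNIV g w"] by (simp add: g_inv)
  moreover have "inv_into UNIV g (take n w) = take n (inv_into UNIV g w)" for n w
    using take[of n "inv_into UNIV g w"] bij by (metis g_inv bij_is_inj inv_f_f)
  ultimately show ?thesis
    using bij bij_imp_bij_inv unfolding tree_isometry_def by blast
qed

lemma group_Isom: "group Isom"
proof (rule groupI)
  fix g assume "g \<in> carrier Isom"
  then have iso: "tree_isometry g" by (simp add: Isom_def)
  then have "surj g"
    by (simp add: tree_isometry_def bij_is_surj)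
  then have "g \<circ> inv_into UNIV g = id"
    by (simp add: surj_iff)
  then show "\<exists>h\<in>carrier Isom. h \<otimes>\<^bsub>Isom\<^esub> g = \<one>\<^bsub>Isom\<^esub>"
    using tree_isometry_inv[OF iso] by (auto simp: Isom_def)
qed (auto simp: Isom_def tree_isometry_def intro: bij_comp)

lemma star_comp: "star x (h \<circ> g) = star x h \<circ> star x g"
  by (rule ext) (auto simp: star_def split: list.splits)

lemma star_id: "star x id = id"
  by (rule ext) (auto simp: star_def split: list.splits)

lemma tree_isometry_star:
  assumes "tree_isometry g"
  shows "tree_isometry (star x g)"
proof -
  have bij: "bij g" and len: "\<And>w. length (g w) = length w"
    and take: "\<And>n w. g (take n w) = take n (g w)"
    using assms unfolding tree_isometry_def by auto
  have "g \<circ> inv_into UNIV g = id" "inv_into UNIV g \<circ> g = id"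
    using bij by (auto simp: bij_def surj_iff inj_iff)
  then have "bij (star x g)"
    by (metis o_bij star_comp star_id)
  moreover have "length (star x g w) = length w" for w
    using len by (auto simp: star_def split: list.splits)
  moreover have "star x g (take n w) = take n (star x g w)" for n w
    using take by (cases w; cases n) (auto simp: star_def)
  ultimately show ?thesis
    unfolding tree_isometry_def by blast
qed

lemma group_hom_star: "group_hom Isom Isom (star x)"
proof -
  have "star x \<in> hom Isom Isom"
    by (rule homI) (auto simp: Isom_def tree_isometry_star star_comp)
  then show ?thesis
    unfolding group_hom_def group_hom_axioms_def by (intro conjI group_Isom)
qed

lemma (in group) word_eval_closed:
  "(\<And>i. f i \<in> carrier G) \<Longrightarrow> word_eval G w f \<in> carrier G"
  by (induction w) auto

lemma (in group_hom) word_eval_hom: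
  assumes "\<And>i. f i \<in> carrier G"
  shows "h (word_eval G w f) = word_eval H w (h \<circ> f)"
proof (induction w)
  case (Cons a w)
  have "word_eval G w f \<in> carrier G"
    using assms by (rule G.word_eval_closed)
  with Cons assms show ?case
    by (cases a) auto
qed simp

lemma prelayered_Inter:
  assumes "\<F> \<noteq> {}" and "\<And>H. H \<in> \<F> \<Longrightarrow> prelayered H"
  shows "prelayered (\<Inter>\<F>)"
proof -
  interpret group Isom by (rule group_Isom)
  show ?thesis
    using assms subgroups_Inter unfolding prelayered_def by blast
qed

lemma prelayered_generate:
  assumes S: "S \<subseteq> carrier Isom" and stable: "\<And>x. star x ` S \<subseteq> S"
  shows "prelayered (generate Isom S)"
proof -
  interpret group Isom by (rule group_Isom)
  have "star x ` generate Isom S \<subseteq> generate Isom S" for x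
  proof -
    interpret group_hom Isom Isom "star x" by (rule group_hom_star)
    have "star x ` generate Isom S = generate Isom (star x ` S)"
      using S by (rule generate_img[symmetric])
    also have "\<dots> \<subseteq> generate Isom S"
      using stable by (rule mono_generate)
    finally show ?thesis .
  qed
  then show ?thesis
    unfolding prelayered_def using generate_is_subgroup[OF S] by blast
qed

lemma prelayered_generate_Un:
  assumes "prelayered H" and "prelayered K"
  shows "prelayered (generate Isom (H \<union> K))"
  using assms
  by (intro prelayered_generate) (auto simp: prelayered_def dest: subgroup.subset)

lemma prelayered_verbal:
  assumes "prelayered H"
  shows "prelayered (verbal w H)"
proof -
  interpret group Isom by (rule group_Isom)
  let ?values = "{word_eval Isom w f | f. \<forall>i. f i \<in> H}"
  have H: "H \<subseteq> carrier Isom" and stable: "\<And>x h. h \<in> H \<Longrightarrow> star x h \<in> H"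
    using assms by (auto simp: prelayered_def dest: subgroup.subset)
  have "?values \<subseteq> carrier Isom"
  proof clarify
    fix f :: "nat \<Rightarrow> _" assume "\<forall>i. f i \<in> H"
    then show "word_eval Isom w f \<in> carrier Isom"
      using H by (intro word_eval_closed) auto
  qed
  moreover have "star x ` ?values \<subseteq> ?values" for x
  proof clarify
    fix f :: "nat \<Rightarrow> _" assume f: "\<forall>i. f i \<in> H"
    interpret group_hom Isom Isom "star x" by (rule group_hom_star)
    have "star x (word_eval Isom w f) = word_eval Isom w (star x \<circ> f)"
      using f H by (intro word_eval_hom) auto
    moreover have "\<forall>i. (star x \<circ> f) i \<in> H"
      using f stable by simp
    ultimately show "\<exists>f'. star x (word_eval Isom w f) = word_eval Isom w f' \<and> (\<forall>i. f' i \<in> H)"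
      by blast
  qed
  ultimately show ?thesis
    unfolding verbal_def by (rule prelayered_generate)
qed

theorem lemma3p3:
  fixes G :: "('x::finite list \<Rightarrow> 'x list) set"
  assumes "card (UNIV :: 'x set) \<ge> 2"
    and "subgroup G Isom"
  shows "(\<forall>\<F>. \<F> \<noteq> {} \<and> (\<forall>H\<in>\<F>. H \<subseteq> G \<and> prelayered H)
              \<longrightarrow> \<Inter>\<F> \<subseteq> G \<and> prelayered (\<Inter>\<F>))
    \<and> (\<forall>H K. H \<subseteq> G \<and> prelayered H \<and> K \<subseteq> G \<and> prelayered K
              \<longrightarrow> generate Isom (H \<union> K) \<subseteq> G \<and> prelayered (generate Isom (H \<union> K)))
    \<and> (\<forall>w H. H \<subseteq> G \<and> prelayered H \<longrightarrow> prelayered (verbal w H))"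
proof (intro conjI allI impI)
  fix \<F> :: "('x list \<Rightarrow> 'x list) set set"
  assume "\<F> \<noteq> {} \<and> (\<forall>H\<in>\<F>. H \<subseteq> G \<and> prelayered H)"
  then show "\<Inter>\<F> \<subseteq> G" and "prelayered (\<Inter>\<F>)"
    by (auto intro: prelayered_Inter)
next
  fix H K :: "('x list \<Rightarrow> 'x list) set"
  assume HK: "H \<subseteq> G \<and> prelayered H \<and> K \<subseteq> G \<and> prelayered K"
  then show "generate Isom (H \<union> K) \<subseteq> G"
    using group.generate_subgroup_incl[OF group_Isom _ assms(2)] by blast
  show "prelayered (generate Isom (H \<union> K))"
    using HK by (intro prelayered_generate_Un) auto
next
  fix w and H :: "('x list \<Rightarrow> 'x list) set"
  assume "H \<subseteq> G \<and> prelayered H"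
  then show "prelayered (verbal w H)"
    by (intro prelayered_verbal) auto
qed

end
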